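(* Let $n\ge1$, let $\mathfrak{n}=\mathfrak{n}(n)$ and let $\operatorname{Der}(\mathfrak{n})$ be its Lie algebra of derivations, with $\operatorname{Der}(\mathfrak{n})_0$ and $\operatorname{Der}(\mathfrak{n})_1$ as in the context. Then: (a) $\operatorname{Der}(\mathfrak{n})_0$ is a Lie subalgebra of $\operatorname{Der}(\mathfrak{n})$ isomorphic to $\mathfrak{gl}(E)$; (b) $\operatorname{Der}(\mathfrak{n})_1$ is a solvable ideal of $\operatorname{Der}(\mathfrak{n})$; (c) $\operatorname{Der}(\mathfrak{n})=\operatorname{Der}(\mathfrak{n})_0\oplus\operatorname{Der}(\mathfrak{n})_1$.
   Context: Fix a field of characteristic zero and a positive integer $n$. The Lie algebra $\mathfrak{n}(n)$ has basis $e_1,\dots,e_n,a,b,x$; $u,y$; $e_i\wedge e_j$ ($1\le i<j\le n$); $c$; $x_1,\dots,x_n$; $u_1,\dots,u_n$; $y_1,\dots,y_n$; $f,h$. Its bracket is defined on basis elements by: $[e_i,e_j]=e_i\wedge e_j$ for $i<j$ (so $[e_j,e_i]=-e_i\wedge e_j$), $[e_i,x]=x_i$, $[e_i,u]=u_i$, $[e_i,y]=y_i$, $[a,b]=c$, $[a,y]=f$, $[a,c]=h$, $[b,u]=h$, $[b,y]=h$, $[x,u]=f$, $[x,y]=h$, extended by antisymmetry, and all other brackets of pairs of basis elements are zero. Let $E=\operatorname{span}\{e_1,\dots,e_n\}$ and let $W$ be the span of all the other basis vectors (so $\mathfrak{n}=E\oplus W$). $\operatorname{Der}(\mathfrak{n})_0$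 is the set of derivations $D$ of $\mathfrak{n}$ with $D(E)\subset E$ and $D(a)=D(b)=D(x)=D(u)=D(y)=0$. $\operatorname{Der}(\mathfrak{n})_1$ is the set of derivations $D$ of $\mathfrak{n}$ with $D(E)\subset W$. *)

theory Defs
  imports Main
begin

text \<open>Basis symbols. Ee i = e_i, EW i j = e_i wedge e_j, Xi i = x_i, Ui i = u_i, Yi i = y_i.
  Only indices 1..n (and i<j for EW) are valid for a given n.\<close>
datatype basis = Ee nat | A | Bb | X | U | Y | EW nat nat | C | Xi nat | Ui nat | Yi nat | F | H

definition idx :: "nat \<Rightarrow> nat set" where "idx n = {1..n}"

definition Bset :: "nat \<Rightarrow> basis set" where
  "Bset n = Ee ` idx n \<union> {A, Bb, X, U, Y, C, F, H}
     \<union> {EW i j | i j. i \<in> idx n \<and> j \<in> idx n \<and> i < j}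
     \<union> Xi ` idx n \<union> Ui ` idx n \<union> Yi ` idx n"

definition Eset :: "nat \<Rightarrow> basis set" where "Eset n = Ee ` idx n"

text \<open>Vectors are coefficient functions on basis symbols, supported on Bset n.\<close>
definition bv :: "basis \<Rightarrow> basis \<Rightarrow> 'k::field" where
  "bv b = (\<lambda>c. if c = b then 1 else 0)"

definition vzero :: "basis \<Rightarrow> 'k::field" where "vzero = (\<lambda>c. 0)"
definition vadd :: "(basis \<Rightarrow> 'k::field) \<Rightarrow> (basis \<Rightarrow> 'k) \<Rightarrow> basis \<Rightarrow> 'k" where
  "vadd v w = (\<lambda>c. v c + w c)"
definition vsmul :: "'k::field \<Rightarrow> (basis \<Rightarrow> 'k) \<Rightarrow> basis \<Rightarrow> 'k" where
  "vsmul a v = (\<lambda>c. a * v c)"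

definition supp_in :: "basis set \<Rightarrow> (basis \<Rightarrow> 'k::field) set" where
  "supp_in S = {v. \<forall>c. c \<notin> S \<longrightarrow> v c = 0}"

definition Vn :: "nat \<Rightarrow> (basis \<Rightarrow> 'k::field) set" where "Vn n = supp_in (Bset n)"
definition En :: "nat \<Rightarrow> (basis \<Rightarrow> 'k::field) set" where "En n = supp_in (Eset n)"
definition Wn :: "nat \<Rightarrow> (basis \<Rightarrow> 'k::field) set" where "Wn n = supp_in (Bset n - Eset n)"

fun br0 :: "basis \<Rightarrow> basis \<Rightarrow> basis \<Rightarrow> 'k::field" where
  "br0 (Ee i) (Ee j) = (if i < j then bv (EW i j) else vzero)"
| "br0 (Ee i) X = bv (Xi i)"
| "br0 (Ee i) U = bv (Ui i)"
| "br0 (Ee i) Y = bv (Yi i)"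
| "br0 A Bb = bv C"
| "br0 A Y = bv F"
| "br0 A C = bv H"
| "br0 Bb U = bv H"
| "br0 Bb Y = bv H"
| "br0 X U = bv F"
| "br0 X Y = bv H"
| "br0 _ _ = vzero"

definition br :: "basis \<Rightarrow> basis \<Rightarrow> basis \<Rightarrow> 'k::field" where
  "br p q = (\<lambda>c. br0 p q c - br0 q p c)"

definition bracket :: "nat \<Rightarrow> (basis \<Rightarrow> 'k::field) \<Rightarrow> (basis \<Rightarrow> 'k) \<Rightarrow> basis \<Rightarrow> 'k" where
  "bracket n v w = (\<lambda>c. \<Sum>p\<in>Bset n. \<Sum>q\<in>Bset n. v p * w q * br p q c)"

definition endo :: "(basis \<Rightarrow> 'k::field) set \<Rightarrow> ((basis \<Rightarrow> 'k) \<Rightarrow> (basis \<Rightarrow> 'k)) set" where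
  "endo S = {T. (\<forall>v\<in>S. T v \<in> S)
     \<and> (\<forall>v\<in>S. \<forall>w\<in>S. T (vadd v w) = vadd (T v) (T w))
     \<and> (\<forall>a. \<forall>v\<in>S. T (vsmul a v) = vsmul a (T v))
     \<and> (\<forall>v. v \<notin> S \<longrightarrow> T v = vzero)}"

definition mzero :: "(basis \<Rightarrow> 'k::field) \<Rightarrow> basis \<Rightarrow> 'k" where "mzero = (\<lambda>v. vzero)"
definition madd :: "((basis \<Rightarrow> 'k::field) \<Rightarrow> basis \<Rightarrow> 'k) \<Rightarrow> ((basis \<Rightarrow> 'k) \<Rightarrow> basis \<Rightarrow> 'k) \<Rightarrow> (basis \<Rightarrow> 'k) \<Rightarrow> basis \<Rightarrow> 'k" where
  "madd S T = (\<lambda>v. vadd (S v) (T v))"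
definition msmul :: "'k::field \<Rightarrow> ((basis \<Rightarrow> 'k) \<Rightarrow> basis \<Rightarrow> 'k) \<Rightarrow> (basis \<Rightarrow> 'k) \<Rightarrow> basis \<Rightarrow> 'k" where
  "msmul a T = (\<lambda>v. vsmul a (T v))"
definition comm :: "((basis \<Rightarrow> 'k::field) \<Rightarrow> basis \<Rightarrow> 'k) \<Rightarrow> ((basis \<Rightarrow> 'k) \<Rightarrow> basis \<Rightarrow> 'k) \<Rightarrow> (basis \<Rightarrow> 'k) \<Rightarrow> basis \<Rightarrow> 'k" where
  "comm S T = (\<lambda>v c. S (T v) c - T (S v) c)"

definition Der :: "nat \<Rightarrow> ((basis \<Rightarrow> 'k::field) \<Rightarrow> basis \<Rightarrow> 'k) set" where
  "Der n = {D \<in> endo (Vn n). \<forall>v\<in>Vn n. \<forall>w\<in>Vn n.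
      D (bracket n v w) = vadd (bracket n (D v) w) (bracket n v (D w))}"

definition Der0 :: "nat \<Rightarrow> ((basis \<Rightarrow> 'k::field) \<Rightarrow> basis \<Rightarrow> 'k) set" where
  "Der0 n = {D \<in> Der n. (\<forall>v\<in>En n. D v \<in> En n)
      \<and> D (bv A) = vzero \<and> D (bv Bb) = vzero \<and> D (bv X) = vzero
      \<and> D (bv U) = vzero \<and> D (bv Y) = vzero}"

definition Der1 :: "nat \<Rightarrow> ((basis \<Rightarrow> 'k::field) \<Rightarrow> basis \<Rightarrow> 'k) set" where
  "Der1 n = {D \<in> Der n. \<forall>v\<in>En n. D v \<in> Wn n}"

definition glE :: "nat \<Rightarrow> ((basis \<Rightarrow> 'k::field) \<Rightarrow> basis \<Rightarrow> 'k) set" where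
  "glE n = endo (En n)"

definition subspace_of :: "((basis \<Rightarrow> 'k::field) \<Rightarrow> basis \<Rightarrow> 'k) set \<Rightarrow> bool" where
  "subspace_of L = (mzero \<in> L \<and> (\<forall>S\<in>L. \<forall>T\<in>L. madd S T \<in> L) \<and> (\<forall>a. \<forall>T\<in>L. msmul a T \<in> L))"

definition lie_subalgebra :: "((basis \<Rightarrow> 'k::field) \<Rightarrow> basis \<Rightarrow> 'k) set \<Rightarrow> ((basis \<Rightarrow> 'k) \<Rightarrow> basis \<Rightarrow> 'k) set \<Rightarrow> bool" where
  "lie_subalgebra L G = (L \<subseteq> G \<and> subspace_of L \<and> (\<forall>S\<in>L. \<forall>T\<in>L. comm S T \<in> L))"

definition lie_ideal :: "((basis \<Rightarrow> 'k::field) \<Rightarrow> basis \<Rightarrow> 'k) set \<Rightarrow> ((basis \<Rightarrow> 'k) \<Rightarrow> basis \<Rightarrow> 'k) set \<Rightarrow> bool" where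
  "lie_ideal I G = (I \<subseteq> G \<and> subspace_of I \<and> (\<forall>S\<in>G. \<forall>T\<in>I. comm S T \<in> I))"

inductive_set comm_span :: "((basis \<Rightarrow> 'k::field) \<Rightarrow> basis \<Rightarrow> 'k) set \<Rightarrow> ((basis \<Rightarrow> 'k) \<Rightarrow> basis \<Rightarrow> 'k) set"
  for L where
  cs_zero: "mzero \<in> comm_span L"
| cs_comm: "S \<in> L \<Longrightarrow> T \<in> L \<Longrightarrow> comm S T \<in> comm_span L"
| cs_add: "S \<in> comm_span L \<Longrightarrow> T \<in> comm_span L \<Longrightarrow> madd S T \<in> comm_span L"
| cs_smul: "T \<in> comm_span L \<Longrightarrow> msmul a T \<in> comm_span L"

fun derived_series :: "((basis \<Rightarrow> 'k::field) \<Rightarrow> basis \<Rightarrow> 'k) set \<Rightarrow> nat \<Rightarrow> ((basis \<Rightarrow> 'k) \<Rightarrow> basis \<Rightarrow> 'k) set" where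
  "derived_series L 0 = L"
| "derived_series L (Suc k) = comm_span (derived_series L k)"

definition solvable :: "((basis \<Rightarrow> 'k::field) \<Rightarrow> basis \<Rightarrow> 'k) set \<Rightarrow> bool" where
  "solvable L = (\<exists>k. derived_series L k = {mzero})"

definition lie_iso :: "(((basis \<Rightarrow> 'k::field) \<Rightarrow> basis \<Rightarrow> 'k) \<Rightarrow> ((basis \<Rightarrow> 'k) \<Rightarrow> basis \<Rightarrow> 'k))
   \<Rightarrow> ((basis \<Rightarrow> 'k) \<Rightarrow> basis \<Rightarrow> 'k) set \<Rightarrow> ((basis \<Rightarrow> 'k) \<Rightarrow> basis \<Rightarrow> 'k) set \<Rightarrow> bool" where
  "lie_iso \<phi> L M = (bij_betw \<phi> L M
     \<and> (\<forall>S\<in>L. \<forall>T\<in>L. \<phi> (madd S T) = madd (\<phi> S) (\<phi> T))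
     \<and> (\<forall>a. \<forall>T\<in>L. \<phi> (msmul a T) = msmul a (\<phi> T))
     \<and> (\<forall>S\<in>L. \<forall>T\<in>L. \<phi> (comm S T) = comm (\<phi> S) (\<phi> T)))"

end

(* A derivation is determined by its values on the generators e_i, a, b, x, u, y, because every
   other basis vector is the bracket of two generators.  The relations [a,x] = [b,x] = [u,y] = 0
   and [x,u] = [a,y] force D a, ..., D y to have no E-component, so every derivation maps W into
   W.  Hence Der_1 is an ideal, and the E-to-E block of a derivation is an arbitrary endomorphism
   of E, which extends uniquely to a derivation killing a, b, x, u, y; restriction to E therefore
   gives Der_0 \<cong> gl(E), and Der = Der_0 \<oplus> Der_1.
   For n \<ge> 1 the remaining relations (now also [a,e_1] = [b,e_1] = 0) show that an element of
   Der_1 has no nonzero entry from a basis vector to a different one of weight at least as large,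
   for the weights e_i: 6, a: 5, b, x, u, y: 4, e_i^e_j: 3, c, x_i, u_i, y_i: 2, f: 1, h: 0.
   Commutators of such maps lower the weight by at least 1, and every further step of the derived
   series by one more, so the seventh derived algebra is zero. *)

theory Submission
  imports Defs
begin

type_synonym 'k vect = "basis \<Rightarrow> 'k"
type_synonym 'k endom = "'k vect \<Rightarrow> 'k vect"

lemma finite_idx [simp]: "finite (idx n)"
  by (simp add: idx_def)

lemma finite_Bset [simp]: "finite (Bset n)"
proof -
  have "{EW i j | i j. i \<in> idx n \<and> j \<in> idx n \<and> i < j} \<subseteq> (\<lambda>(i, j). EW i j) ` (idx n \<times> idx n)"
    by auto
  then have "finite {EW i j | i j. i \<in> idx n \<and> j \<in> idx n \<and> i < j}"
    by (rule finite_subset) simp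
  then show ?thesis by (simp add: Bset_def)
qed

lemma finite_Eset [simp]: "finite (Eset n)"
  by (simp add: Eset_def)

lemma Bset_mem [simp]:
  "Ee i \<in> Bset n \<longleftrightarrow> i \<in> idx n"
  "A \<in> Bset n" "Bb \<in> Bset n" "X \<in> Bset n" "U \<in> Bset n" "Y \<in> Bset n"
  "C \<in> Bset n" "F \<in> Bset n" "H \<in> Bset n"
  "EW i j \<in> Bset n \<longleftrightarrow> i \<in> idx n \<and> j \<in> idx n \<and> i < j"
  "Xi i \<in> Bset n \<longleftrightarrow> i \<in> idx n"
  "Ui i \<in> Bset n \<longleftrightarrow> i \<in> idx n"
  "Yi i \<in> Bset n \<longleftrightarrow> i \<in> idx n"
  by (auto simp: Bset_def)

lemma Eset_mem [simp]:
  "Ee i \<in> Eset n \<longleftrightarrow> i \<in> idx n"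
  "A \<notin> Eset n" "Bb \<notin> Eset n" "X \<notin> Eset n" "U \<notin> Eset n" "Y \<notin> Eset n"
  "C \<notin> Eset n" "F \<notin> Eset n" "H \<notin> Eset n"
  "EW i j \<notin> Eset n" "Xi i \<notin> Eset n" "Ui i \<notin> Eset n" "Yi i \<notin> Eset n"
  by (auto simp: Eset_def)

lemma Eset_subset_Bset: "Eset n \<subseteq> Bset n"
  by (auto simp: Eset_def Bset_def)

lemma supp_inI: "(\<And>c. c \<notin> S \<Longrightarrow> v c = 0) \<Longrightarrow> v \<in> supp_in S"
  by (simp add: supp_in_def)

lemma vzero_in_supp [simp]: "vzero \<in> supp_in S"
  by (simp add: supp_in_def vzero_def)

lemma vadd_in_supp [simp]: "v \<in> supp_in S \<Longrightarrow> w \<in> supp_in S \<Longrightarrow> vadd v w \<in> supp_in S"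
  by (simp add: supp_in_def vadd_def)

lemma vsmul_in_supp [simp]: "v \<in> supp_in S \<Longrightarrow> vsmul a v \<in> supp_in S"
  by (simp add: supp_in_def vsmul_def)

lemma En_vadd [simp]: "v \<in> En n \<Longrightarrow> w \<in> En n \<Longrightarrow> vadd v w \<in> En n"
  by (simp add: En_def)

lemma En_vsmul [simp]: "v \<in> En n \<Longrightarrow> vsmul a v \<in> En n"
  by (simp add: En_def)

lemma supp_in_mono: "S \<subseteq> T \<Longrightarrow> v \<in> supp_in S \<Longrightarrow> v \<in> supp_in T"
  by (auto simp: supp_in_def)

lemma bv_in_supp [simp]: "bv p \<in> supp_in S \<longleftrightarrow> p \<in> S"
  by (auto simp: supp_in_def bv_def)

lemma En_imp_Vn: "v \<in> En n \<Longrightarrow> v \<in> Vn n"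
  unfolding En_def Vn_def using Eset_subset_Bset supp_in_mono by blast

lemma En_coord_outside: "v \<in> En n \<Longrightarrow> c \<notin> Eset n \<Longrightarrow> v c = 0"
  by (simp add: En_def supp_in_def)

lemma Wn_coord_Eset: "v \<in> Wn n \<Longrightarrow> c \<in> Eset n \<Longrightarrow> v c = 0"
  by (simp add: Wn_def supp_in_def)

lemma bv_apply: "bv p q = (if q = p then 1 else 0)"
  by (simp add: bv_def)

lemma bv_same [simp]: "bv p p = 1"
  by (simp add: bv_def)

lemma bv_diff [simp]: "q \<noteq> p \<Longrightarrow> bv p q = 0"
  by (simp add: bv_def)

lemma sum_mult_bv: "finite S \<Longrightarrow> (\<Sum>p\<in>S. v p * bv p c) = (if c \<in> S then v c else 0)"
  by (simp add: bv_apply if_distrib[of "\<lambda>x. _ * x"] cong: if_cong)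

lemma sum_bv_mult: "finite S \<Longrightarrow> (\<Sum>p\<in>S. bv c p * v p) = (if c \<in> S then v c else 0)"
  by (simp add: bv_apply if_distrib[of "\<lambda>x. x * _"] cong: if_cong)

lemma vzero_apply: "vzero c = 0"
  by (simp add: vzero_def)

lemma vadd_apply: "vadd v w c = v c + w c"
  by (simp add: vadd_def)

lemma vsmul_apply: "vsmul a v c = a * v c"
  by (simp add: vsmul_def)

lemmas vect_apply = vzero_apply vadd_apply vsmul_apply

fun bracket_support :: "basis \<Rightarrow> (basis \<times> basis) set" where
  "bracket_support (EW i j) = (if i < j then {(Ee i, Ee j)} else {})"
| "bracket_support C = {(A, Bb)}"
| "bracket_support (Xi i) = {(Ee i, X)}"
| "bracket_support (Ui i) = {(Ee i, U)}"
| "bracket_support (Yi i) = {(Ee i, Y)}"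
| "bracket_support F = {(A, Y), (X, U)}"
| "bracket_support H = {(A, C), (Bb, U), (Bb, Y), (X, Y)}"
| "bracket_support _ = {}"

lemma br0_eq_indicator: "(br0 p q c :: 'k::field) = (if (p, q) \<in> bracket_support c then 1 else 0)"
  by (cases p; cases q; simp add: bv_def vzero_def; cases c; auto)

lemma bracket_eq_sum_support:
  "bracket n v w c = (\<Sum>x\<in>bracket_support c \<inter> (Bset n \<times> Bset n). v (fst x) * w (snd x) - v (snd x) * w (fst x))"
proof -
  let ?S = "Bset n \<times> Bset n" and ?P = "bracket_support c"
  have "bracket n v w c = (\<Sum>x\<in>?S. v (fst x) * w (snd x) * br (fst x) (snd x) c)"
    by (simp add: bracket_def sum.cartesian_product case_prod_beta)
  also have "\<dots> = (\<Sum>x\<in>?S. if x \<in> ?P then v (fst x) * w (snd x) else 0)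
              - (\<Sum>x\<in>?S. if prod.swap x \<in> ?P then v (fst x) * w (snd x) else 0)"
    unfolding sum_subtractf[symmetric]
    by (rule sum.cong) (auto simp: br_def br0_eq_indicator algebra_simps)
  also have "(\<Sum>x\<in>?S. if x \<in> ?P then v (fst x) * w (snd x) else 0)
      = (\<Sum>x\<in>?S \<inter> ?P. v (fst x) * w (snd x))"
    by (simp add: sum.inter_restrict)
  also have "(\<Sum>x\<in>?S. if prod.swap x \<in> ?P then v (fst x) * w (snd x) else 0)
      = (\<Sum>x\<in>?S \<inter> {x. prod.swap x \<in> ?P}. v (fst x) * w (snd x))"
    by (simp add: sum.inter_restrict)
  also have "?S \<inter> {x. prod.swap x \<in> ?P} = prod.swap ` (?S \<inter> ?P)"
    by force
  also have "(\<Sum>x\<in>prod.swap ` (?S \<inter> ?P). v (fst x) * w (snd x))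
      = (\<Sum>x\<in>?S \<inter> ?P. v (snd x) * w (fst x))"
    by (subst sum.reindex) (auto simp: inj_on_def)
  finally show ?thesis by (simp add: sum_subtractf Int_commute)
qed

lemma bracket_coord_simps [simp]:
  "bracket n v w (Ee i) = 0" "bracket n v w A = 0" "bracket n v w Bb = 0"
  "bracket n v w X = 0" "bracket n v w U = 0" "bracket n v w Y = 0"
  "bracket n v w C = v A * w Bb - v Bb * w A"
  "bracket n v w (Xi i) = (if i \<in> idx n then v (Ee i) * w X - v X * w (Ee i) else 0)"
  "bracket n v w (Ui i) = (if i \<in> idx n then v (Ee i) * w U - v U * w (Ee i) else 0)"
  "bracket n v w (Yi i) = (if i \<in> idx n then v (Ee i) * w Y - v Y * w (Ee i) else 0)"
  "bracket n v w F = (v A * w Y - v Y * w A) + (v X * w U - v U * w X)"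
  "bracket n v w H = (v A * w C - v C * w A) + (v Bb * w U - v U * w Bb)
    + (v Bb * w Y - v Y * w Bb) + (v X * w Y - v Y * w X)"
  by (simp_all add: bracket_eq_sum_support algebra_simps)

lemma bracket_EW [simp]:
  "bracket n v w (EW i j) =
    (if i \<in> idx n \<and> j \<in> idx n \<and> i < j then v (Ee i) * w (Ee j) - v (Ee j) * w (Ee i) else 0)"
proof (cases "i \<in> idx n \<and> j \<in> idx n \<and> i < j")
  case True
  then have "bracket_support (EW i j) \<inter> (Bset n \<times> Bset n) = {(Ee i, Ee j)}" by auto
  then show ?thesis using True by (simp add: bracket_eq_sum_support)
next
  case False
  then have "bracket_support (EW i j) \<inter> (Bset n \<times> Bset n) = {}" by auto
  then show ?thesis using False by (simp only: bracket_eq_sum_support sum.empty if_False)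
qed

lemma bracket_in_Vn [simp]: "bracket n v w \<in> Vn n"
  unfolding Vn_def
proof (rule supp_inI)
  fix c assume "c \<notin> Bset n"
  then show "bracket n v w c = 0" by (cases c) auto
qed

lemma bracket_vadd_left: "bracket n (vadd v1 v2) w = vadd (bracket n v1 w) (bracket n v2 w)"
  by (simp add: vect_apply bracket_def fun_eq_iff distrib_right sum.distrib)

lemma bracket_vadd_right: "bracket n v (vadd w1 w2) = vadd (bracket n v w1) (bracket n v w2)"
  by (simp add: vect_apply bracket_def fun_eq_iff distrib_right distrib_left sum.distrib)

lemma bracket_vsmul_left: "bracket n (vsmul a v) w = vsmul a (bracket n v w)"
  by (simp add: vect_apply bracket_def fun_eq_iff sum_distrib_left mult.assoc)

lemma bracket_vsmul_right: "bracket n v (vsmul a w) = vsmul a (bracket n v w)"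
  by (simp add: vect_apply bracket_def fun_eq_iff sum_distrib_left algebra_simps)

lemma bracket_vzero_left [simp]: "bracket n vzero w = vzero"
  by (simp add: bracket_def fun_eq_iff vzero_def)

lemma bracket_vzero_right [simp]: "bracket n v vzero = vzero"
  by (simp add: bracket_def fun_eq_iff vzero_def)

lemma bracket_diff_left: "bracket n (\<lambda>c. f c - g c) w = (\<lambda>c. bracket n f w c - bracket n g w c)"
  by (simp add: bracket_def fun_eq_iff left_diff_distrib sum_subtractf)

lemma bracket_diff_right: "bracket n v (\<lambda>c. f c - g c) = (\<lambda>c. bracket n v f c - bracket n v g c)"
  by (simp add: bracket_def fun_eq_iff left_diff_distrib right_diff_distrib sum_subtractf)

lemma bracket_bv_bv:
  assumes "p \<in> Bset n" "q \<in> Bset n"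
  shows "bracket n (bv p) (bv q) = br p q"
proof (rule ext)
  fix c
  have "bracket n (bv p) (bv q) c = (\<Sum>p'\<in>Bset n. bv p p' * (\<Sum>q'\<in>Bset n. bv q q' * br p' q' c))"
    by (simp add: bracket_def sum_distrib_left mult.assoc)
  also have "\<dots> = br p q c"
    using assms by (simp add: sum_bv_mult)
  finally show "bracket n (bv p) (bv q) c = br p q c" .
qed

lemma br_simps:
  "br (Ee i) X = bv (Xi i)" "br (Ee i) U = bv (Ui i)" "br (Ee i) Y = bv (Yi i)"
  "i < j \<Longrightarrow> br (Ee i) (Ee j) = bv (EW i j)"
  "br A Bb = bv C" "br A Y = bv F" "br X U = bv F" "br Bb U = bv H" "br Bb Y = bv H" "br X Y = bv H"
  "br A X = vzero" "br A U = vzero" "br Bb X = vzero" "br U Y = vzero"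
  "br A (Ee j) = vzero" "br Bb (Ee j) = vzero"
  by (auto simp: br_def fun_eq_iff bv_apply vzero_def)

lemma endoD:
  assumes "T \<in> endo S"
  shows "v \<in> S \<Longrightarrow> T v \<in> S"
    and "v \<in> S \<Longrightarrow> w \<in> S \<Longrightarrow> T (vadd v w) = vadd (T v) (T w)"
    and "v \<in> S \<Longrightarrow> T (vsmul a v) = vsmul a (T v)"
    and "v \<notin> S \<Longrightarrow> T v = vzero"
  using assms by (auto simp: endo_def)

lemma endo_vzero:
  assumes T: "T \<in> endo (supp_in S)"
  shows "T vzero = vzero"
proof -
  have "T vzero = T (vsmul 0 vzero)" by (simp add: vsmul_def vzero_def)
  also have "\<dots> = vsmul 0 (T vzero)" using endoD(3)[OF T] by simp
  also have "\<dots> = vzero" by (simp add: vsmul_def vzero_def)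
  finally show ?thesis .
qed

lemma endo_in_supp:
  assumes "T \<in> endo (supp_in S)"
  shows "T v \<in> supp_in S"
  using endoD(1,4)[OF assms, of v] by (cases "v \<in> supp_in S") auto

lemma endo_basis_expansion:
  assumes T: "T \<in> endo (supp_in S)" and fin: "finite S" and v: "v \<in> supp_in S"
  shows "T v = (\<lambda>c. \<Sum>p\<in>S. v p * T (bv p) c)"
proof -
  have "T (\<lambda>c. \<Sum>p\<in>G. v p * bv p c) = (\<lambda>c. \<Sum>p\<in>G. v p * T (bv p) c)"
    if "finite G" "G \<subseteq> S" for G
    using that
  proof (induction G rule: finite_induct)
    case empty
    then show ?case using endo_vzero[OF T] by (simp add: vzero_def[symmetric])
  next
    case (insert x G)
    have split: "(\<lambda>c. \<Sum>p\<in>insert x G. v p * bv p c)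
        = vadd (vsmul (v x) (bv x)) (\<lambda>c. \<Sum>p\<in>G. v p * bv p c)"
      using insert by (simp add: vadd_def vsmul_def fun_eq_iff)
    have rest: "(\<lambda>c. \<Sum>p\<in>G. v p * bv p c) \<in> supp_in S"
      using insert by (intro supp_inI) (auto intro!: sum.neutral simp: bv_apply)
    have head: "vsmul (v x) (bv x) \<in> supp_in S"
      using insert by simp
    have "T (\<lambda>c. \<Sum>p\<in>insert x G. v p * bv p c)
        = vadd (vsmul (v x) (T (bv x))) (\<lambda>c. \<Sum>p\<in>G. v p * T (bv p) c)"
      unfolding split endoD(2)[OF T head rest] using insert endoD(3)[OF T] by simp
    then show ?case
      using insert by (simp add: fun_eq_iff vect_apply)
  qed
  moreover have "(\<lambda>c. \<Sum>p\<in>S. v p * bv p c) = v"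
    using v fin by (auto simp: fun_eq_iff sum_mult_bv supp_in_def)
  ultimately show ?thesis using fin by fastforce
qed

lemma endo_comp_basis_expansion:
  assumes "S \<in> endo (supp_in B)" "T \<in> endo (supp_in B)" "finite B"
  shows "S (T v) q = (\<Sum>r\<in>B. T v r * S (bv r) q)"
  using endo_basis_expansion[OF assms(1,3) endo_in_supp[OF assms(2)]] by simp

lemma endo_mzero: "mzero \<in> endo (supp_in S)"
  unfolding endo_def mzero_def by (auto simp: fun_eq_iff vect_apply)

lemma endo_madd:
  assumes "S \<in> endo (supp_in B)" and "T \<in> endo (supp_in B)"
  shows "madd S T \<in> endo (supp_in B)"
  using endoD[OF assms(1)] endoD[OF assms(2)]
  by (auto simp: endo_def madd_def fun_eq_iff vect_apply algebra_simps)

lemma endo_msmul: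
  assumes "T \<in> endo (supp_in B)"
  shows "msmul a T \<in> endo (supp_in B)"
  using endoD[OF assms] by (auto simp: endo_def msmul_def fun_eq_iff vect_apply algebra_simps)

lemma endo_comm:
  assumes S: "S \<in> endo (supp_in B)" and T: "T \<in> endo (supp_in B)"
  shows "comm S T \<in> endo (supp_in B)"
proof -
  have "comm S T v \<in> supp_in B" for v
    using endo_in_supp[OF S, of "T v"] endo_in_supp[OF T, of "S v"]
    by (auto simp: supp_in_def comm_def)
  moreover have "comm S T (vadd v w) = vadd (comm S T v) (comm S T w)"
    if "v \<in> supp_in B" "w \<in> supp_in B" for v w
    using that by (simp add: comm_def endoD(2)[OF S] endoD(2)[OF T] endo_in_supp[OF S]
        endo_in_supp[OF T] fun_eq_iff vect_apply)
  moreover have "comm S T (vsmul a v) = vsmul a (comm S T v)" if "v \<in> supp_in B" for v a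
    using that by (simp add: comm_def endoD(3)[OF S] endoD(3)[OF T] endo_in_supp[OF S]
        endo_in_supp[OF T] fun_eq_iff vect_apply algebra_simps)
  moreover have "comm S T v = vzero" if "v \<notin> supp_in B" for v
    using that by (simp add: comm_def endoD(4)[OF S] endoD(4)[OF T] endo_vzero[OF S]
        endo_vzero[OF T] fun_eq_iff vect_apply)
  ultimately show ?thesis by (simp add: endo_def)
qed

lemma DerD:
  assumes "D \<in> Der n"
  shows "D \<in> endo (Vn n)"
    and "v \<in> Vn n \<Longrightarrow> w \<in> Vn n \<Longrightarrow> D (bracket n v w) = vadd (bracket n (D v) w) (bracket n v (D w))"
  using assms by (auto simp: Der_def)

lemma Der_vzero: "D \<in> Der n \<Longrightarrow> D vzero = vzero"
  using DerD(1) endo_vzero unfolding Vn_def by blast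

lemma Der_in_Vn: "D \<in> Der n \<Longrightarrow> D v \<in> Vn n"
  using DerD(1) endo_in_supp unfolding Vn_def by blast

lemma Der_coord_outside: "D \<in> Der n \<Longrightarrow> c \<notin> Bset n \<Longrightarrow> D v c = 0"
  using Der_in_Vn unfolding Vn_def supp_in_def by blast

lemma Der_bv_outside: "D \<in> Der n \<Longrightarrow> p \<notin> Bset n \<Longrightarrow> D (bv p) = vzero"
  using endoD(4)[OF DerD(1), of D n "bv p"] by (simp add: Vn_def)

lemma Der_basis_expansion: "D \<in> Der n \<Longrightarrow> v \<in> Vn n \<Longrightarrow> D v = (\<lambda>c. \<Sum>p\<in>Bset n. v p * D (bv p) c)"
  using DerD(1) endo_basis_expansion unfolding Vn_def by (metis finite_Bset)

definition leibniz :: "nat \<Rightarrow> 'k::field endom \<Rightarrow> basis \<Rightarrow> basis \<Rightarrow> 'k vect" where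
  "leibniz n D p q = vadd (bracket n (D (bv p)) (bv q)) (bracket n (bv p) (D (bv q)))"

lemma Der_br:
  assumes "D \<in> Der n" "p \<in> Bset n" "q \<in> Bset n"
  shows "D (br p q) = leibniz n D p q"
  using DerD(2)[OF assms(1), of "bv p" "bv q"] assms by (simp add: Vn_def bracket_bv_bv leibniz_def)

lemma Der_br_vzero:
  fixes D :: "'k::field endom"
  assumes "D \<in> Der n" "p \<in> Bset n" "q \<in> Bset n" "(br p q :: 'k vect) = vzero"
  shows "leibniz n D p q = vzero"
proof -
  have "leibniz n D p q = D (br p q)" using Der_br[OF assms(1-3)] by simp
  then show ?thesis using assms(4) Der_vzero[OF assms(1)] by simp
qed

lemma Der_br_eq:
  fixes D :: "'k::field endom"
  assumes "D \<in> Der n" "p \<in> Bset n" "q \<in> Bset n" "p' \<in> Bset n" "q' \<in> Bset n"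
    and "(br p q :: 'k vect) = br p' q'"
  shows "leibniz n D p q = leibniz n D p' q'"
  by (metis Der_br[OF assms(1-3)] Der_br[OF assms(1,4,5)] assms(6))

lemma Der_mzero: "mzero \<in> Der n"
  unfolding Der_def using endo_mzero[of "Bset n"] by (simp add: Vn_def mzero_def fun_eq_iff vect_apply)

lemma Der_madd:
  assumes S: "S \<in> Der n" and T: "T \<in> Der n"
  shows "madd S T \<in> Der n"
proof -
  have "madd S T \<in> endo (Vn n)"
    using endo_madd DerD(1)[OF S] DerD(1)[OF T] unfolding Vn_def by blast
  moreover have "madd S T (bracket n v w) = vadd (bracket n (madd S T v) w) (bracket n v (madd S T w))"
    if "v \<in> Vn n" "w \<in> Vn n" for v w
    using DerD(2)[OF S that] DerD(2)[OF T that]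
    by (simp add: madd_def bracket_vadd_left bracket_vadd_right fun_eq_iff vect_apply algebra_simps)
  ultimately show ?thesis by (simp add: Der_def)
qed

lemma Der_msmul:
  assumes T: "T \<in> Der n"
  shows "msmul a T \<in> Der n"
proof -
  have "msmul a T \<in> endo (Vn n)"
    using endo_msmul DerD(1)[OF T] unfolding Vn_def by blast
  moreover have "msmul a T (bracket n v w) = vadd (bracket n (msmul a T v) w) (bracket n v (msmul a T w))"
    if "v \<in> Vn n" "w \<in> Vn n" for v w
    using DerD(2)[OF T that]
    by (simp add: msmul_def bracket_vsmul_left bracket_vsmul_right fun_eq_iff vect_apply algebra_simps)
  ultimately show ?thesis by (simp add: Der_def)
qed

lemma Der_diff: "S \<in> Der n \<Longrightarrow> T \<in> Der n \<Longrightarrow> madd S (msmul (-1) T) \<in> Der n"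
  by (simp add: Der_madd Der_msmul)

lemma Der_comm:
  assumes S: "S \<in> Der n" and T: "T \<in> Der n"
  shows "comm S T \<in> Der n"
proof -
  have eS: "S \<in> endo (Vn n)" and eT: "T \<in> endo (Vn n)"
    using DerD(1) S T by blast+
  have "comm S T \<in> endo (Vn n)"
    using endo_comm eS eT unfolding Vn_def by blast
  moreover have "comm S T (bracket n v w) = vadd (bracket n (comm S T v) w) (bracket n v (comm S T w))"
    if v: "v \<in> Vn n" and w: "w \<in> Vn n" for v w
  proof -
    have images: "T v \<in> Vn n" "T w \<in> Vn n" "S v \<in> Vn n" "S w \<in> Vn n"
      using Der_in_Vn S T by blast+
    have "S (T (bracket n v w)) = vadd (vadd (bracket n (S (T v)) w) (bracket n (T v) (S w)))
        (vadd (bracket n (S v) (T w)) (bracket n v (S (T w))))"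
      by (simp add: DerD(2)[OF T v w] endoD(2)[OF eS] DerD(2)[OF S] images v w)
    moreover have "T (S (bracket n v w)) = vadd (vadd (bracket n (T (S v)) w) (bracket n (S v) (T w)))
        (vadd (bracket n (T v) (S w)) (bracket n v (T (S w))))"
      by (simp add: DerD(2)[OF S v w] endoD(2)[OF eT] DerD(2)[OF T] images v w)
    ultimately show ?thesis
      by (simp add: comm_def fun_eq_iff bracket_diff_left bracket_diff_right vect_apply algebra_simps)
  qed
  ultimately show ?thesis by (simp add: Der_def)
qed

section \<open>Derivations on the generators\<close>

lemma Der_generator_E_coords:
  assumes D: "D \<in> Der n"
  shows "D (bv A) (Ee k) = 0" "D (bv Bb) (Ee k) = 0" "D (bv X) (Ee k) = 0"
    "D (bv U) (Ee k) = 0" "D (bv Y) (Ee k) = 0"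
proof -
  have outside: "D v (Ee k) = 0" if "k \<notin> idx n" for v
    using Der_coord_outside[OF D] that by simp
  have zero: "leibniz n D A X = vzero" "leibniz n D Bb X = vzero" "leibniz n D U Y = vzero"
    by (rule Der_br_vzero[OF D]; simp add: br_simps)+
  have same_F: "leibniz n D X U = leibniz n D A Y"
    by (rule Der_br_eq[OF D]; simp add: br_simps)
  note coord = fun_cong[where x = "Xi k"] fun_cong[where x = "Ui k"] fun_cong[where x = "Yi k"]
  show "D (bv A) (Ee k) = 0"
    using coord(1)[OF zero(1)] outside by (cases "k \<in> idx n") (auto simp: leibniz_def vect_apply)
  show "D (bv Bb) (Ee k) = 0"
    using coord(1)[OF zero(2)] outside by (cases "k \<in> idx n") (auto simp: leibniz_def vect_apply)
  show "D (bv U) (Ee k) = 0"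
    using coord(3)[OF zero(3)] outside by (cases "k \<in> idx n") (auto simp: leibniz_def vect_apply)
  show "D (bv Y) (Ee k) = 0"
    using coord(2)[OF zero(3)] outside by (cases "k \<in> idx n") (auto simp: leibniz_def vect_apply)
  show "D (bv X) (Ee k) = 0"
    using coord(2)[OF same_F] outside by (cases "k \<in> idx n") (auto simp: leibniz_def vect_apply)
qed

lemma Der_generator_G_coords:
  assumes D: "D \<in> Der n" and n: "n \<ge> 1"
  shows "D (bv Bb) A = 0" "D (bv Bb) X = 0" "D (bv Bb) U = 0" "D (bv Bb) Y = 0"
    and "D (bv X) A = 0" "D (bv X) Bb = 0" "D (bv X) U = 0" "D (bv X) Y = 0"
    and "D (bv U) A = 0" "D (bv U) Bb = 0" "D (bv U) X = 0" "D (bv U) Y = 0"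
    and "D (bv Y) A = 0" "D (bv Y) Bb = 0" "D (bv Y) X = 0" "D (bv Y) U = 0"
proof -
  have one: "Suc 0 \<in> idx n" "Ee 1 \<in> Bset n" using n by (simp_all add: idx_def)
  have zero: "leibniz n D A X = vzero" "leibniz n D A U = vzero" "leibniz n D Bb X = vzero"
    "leibniz n D U Y = vzero"
    by (rule Der_br_vzero[OF D]; simp add: br_simps)+
  have zero_E: "leibniz n D A (Ee 1) = vzero" "leibniz n D Bb (Ee 1) = vzero"
    by (rule Der_br_vzero[OF D _ one(2)]; simp add: br_simps)+
  have same_H: "leibniz n D Bb U = leibniz n D X Y" "leibniz n D Bb Y = leibniz n D X Y"
    by (rule Der_br_eq[OF D]; simp add: br_simps)+
  have same_F: "leibniz n D X U = leibniz n D A Y"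
    by (rule Der_br_eq[OF D]; simp add: br_simps)
  note at = fun_cong[where x = C] fun_cong[where x = F] fun_cong[where x = H]
    fun_cong[where x = "Xi 1"] fun_cong[where x = "Ui 1"] fun_cong[where x = "Yi 1"]
  note coords = leibniz_def vect_apply one(1)
  have aX: "D (bv A) X = 0" using at(4)[OF zero_E(1)] by (simp add: coords)
  have aU: "D (bv A) U = 0" using at(5)[OF zero_E(1)] by (simp add: coords)
  show bX: "D (bv Bb) X = 0" using at(4)[OF zero_E(2)] by (simp add: coords)
  show "D (bv Bb) U = 0" using at(5)[OF zero_E(2)] by (simp add: coords)
  show bY: "D (bv Bb) Y = 0" using at(6)[OF zero_E(2)] by (simp add: coords)
  show xA: "D (bv X) A = 0" using at(1)[OF zero(3)] by (simp add: coords)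
  show "D (bv X) Bb = 0" using at(1)[OF zero(1)] by (simp add: coords)
  show xY: "D (bv X) Y = 0" using at(2)[OF zero(1)] aU by (simp add: coords)
  show "D (bv X) U = 0" using at(3)[OF zero(3)] bY xY by (simp add: coords)
  show uB: "D (bv U) Bb = 0" using at(1)[OF zero(2)] by (simp add: coords)
  show "D (bv U) Y = 0" using at(2)[OF zero(2)] aX by (simp add: coords)
  show uA: "D (bv U) A = 0" using at(1)[OF same_H(1)] by (simp add: coords)
  show "D (bv Y) A = 0" using at(1)[OF same_H(2)] by (simp add: coords)
  have "D (bv Bb) X = D (bv Bb) A"
    using at(2)[OF trans[OF same_H(1) same_H(2)[symmetric]]] by (simp add: coords)
  then show bA: "D (bv Bb) A = 0" using bX by simp
  show "D (bv Y) U = 0" using at(2)[OF same_H(2)] bA xA by (simp add: coords)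
  show yB: "D (bv Y) Bb = 0" using at(1)[OF same_F] by (simp add: coords)
  show "D (bv Y) X = 0" using at(2)[OF zero(4)] uA by (simp add: coords)
  show "D (bv U) X = 0" using at(3)[OF zero(4)] uB yB by (simp add: coords)
qed

definition generator :: "basis \<Rightarrow> bool" where
  "generator p \<longleftrightarrow> (\<exists>i. p = Ee i) \<or> p \<in> {A, Bb, X, U, Y}"

lemma nongenerator_eq_br_generators:
  assumes "p \<in> Bset n" "\<not> generator p"
  obtains p1 p2 where "p1 \<in> Bset n" "p2 \<in> Bset n" "generator p1" "generator p2" "br p1 p2 = bv p"
proof (cases p)
  case (EW i j)
  then show ?thesis using assms that[of "Ee i" "Ee j"] by (auto simp: br_simps generator_def)
next
  case C
  then show ?thesis using assms that[of A Bb] by (auto simp: br_simps generator_def)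
next
  case (Xi i)
  then show ?thesis using assms that[of "Ee i" X] by (auto simp: br_simps generator_def)
next
  case (Ui i)
  then show ?thesis using assms that[of "Ee i" U] by (auto simp: br_simps generator_def)
next
  case (Yi i)
  then show ?thesis using assms that[of "Ee i" Y] by (auto simp: br_simps generator_def)
next
  case F
  then show ?thesis using assms that[of A Y] by (auto simp: br_simps generator_def)
next
  case H
  then show ?thesis using assms that[of Bb U] by (auto simp: br_simps generator_def)
qed (use assms in \<open>auto simp: generator_def\<close>)

lemma Der_nongenerator:
  assumes D: "D \<in> Der n" and "p \<in> Bset n" "\<not> generator p"
  obtains p1 p2 where "generator p1" "generator p2" "D (bv p) = leibniz n D p1 p2"
  by (metis nongenerator_eq_br_generators[OF assms(2,3)] Der_br[OF D])

lemma Der_eq_mzero_if_generators: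
  assumes D: "D \<in> Der n" and gen: "\<And>p. generator p \<Longrightarrow> D (bv p) = vzero"
  shows "D = mzero"
proof -
  have basis: "D (bv p) = vzero" for p
  proof (cases "p \<in> Bset n \<and> \<not> generator p")
    case True
    then obtain p1 p2 where "generator p1" "generator p2" "D (bv p) = leibniz n D p1 p2"
      using Der_nongenerator[OF D] by blast
    then show ?thesis using gen by (simp add: leibniz_def fun_eq_iff vect_apply)
  qed (use gen Der_bv_outside[OF D] in blast)
  show ?thesis
  proof
    fix v
    show "D v = mzero v"
    proof (cases "v \<in> Vn n")
      case True
      then show ?thesis using Der_basis_expansion[OF D True] basis by (simp add: mzero_def vzero_def)
    qed (use endoD(4)[OF DerD(1)[OF D]] in \<open>simp add: mzero_def\<close>)
  qed
qed

lemma Der_E_coord_of_W_basis: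
  assumes D: "D \<in> Der n" and p: "p \<notin> Eset n"
  shows "D (bv p) (Ee i) = 0"
proof (cases "p \<in> Bset n")
  case False
  then show ?thesis using Der_bv_outside[OF D] by (simp add: vect_apply)
next
  case True
  show ?thesis
  proof (cases "generator p")
    case True
    then show ?thesis using p Der_generator_E_coords[OF D] \<open>p \<in> Bset n\<close> by (auto simp: generator_def)
  next
    case False
    then show ?thesis
      using Der_nongenerator[OF D \<open>p \<in> Bset n\<close>] by (metis leibniz_def bracket_coord_simps(1) vadd_apply add_0)
  qed
qed

lemma Der_Wn:
  assumes D: "D \<in> Der n" and v: "v \<in> Wn n"
  shows "D v \<in> Wn n"
  unfolding Wn_def
proof (rule supp_inI)
  fix c assume c: "c \<notin> Bset n - Eset n"
  show "D v c = 0"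
  proof (cases "c \<in> Bset n")
    case True
    then obtain i where i: "c = Ee i" using c by (auto simp: Eset_def)
    have "v \<in> Vn n" using v by (auto simp: Wn_def Vn_def supp_in_def)
    then have "D v c = (\<Sum>p\<in>Bset n. v p * D (bv p) c)" using Der_basis_expansion[OF D] by simp
    also have "\<dots> = 0"
      using Wn_coord_Eset[OF v] Der_E_coord_of_W_basis[OF D] i by (intro sum.neutral) force
    finally show ?thesis .
  qed (use Der_coord_outside[OF D] in blast)
qed

lemma Der1_E_coord:
  assumes D: "D \<in> Der1 n"
  shows "D (bv p) (Ee i) = 0"
proof (cases "p \<in> Eset n")
  case True
  then have "D (bv p) \<in> Wn n" using D by (auto simp: Der1_def En_def)
  then show ?thesis by (auto simp: Wn_def supp_in_def)
next
  case False
  then show ?thesis using Der_E_coord_of_W_basis D by (auto simp: Der1_def)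
qed

lemma Der0_lie_subalgebra: "lie_subalgebra (Der0 n :: 'k::field endom set) (Der n)"
proof -
  have "comm S T \<in> Der0 n" if S: "S \<in> Der0 n" and T: "T \<in> Der0 n" for S T :: "'k endom"
  proof -
    have SD: "S \<in> Der n" and TD: "T \<in> Der n" using S T by (auto simp: Der0_def)
    moreover have "comm S T v \<in> En n" if "v \<in> En n" for v
      using S T that by (auto simp: Der0_def comm_def En_def supp_in_def)
    moreover have "comm S T (bv p) = vzero" if "p \<in> {A, Bb, X, U, Y}" for p
    proof -
      have "S (bv p) = vzero" "T (bv p) = vzero" using S T that by (auto simp: Der0_def)
      then have "comm S T (bv p) = (\<lambda>c. S vzero c - T vzero c)" by (simp add: comm_def)
      then show ?thesis by (simp add: Der_vzero[OF SD] Der_vzero[OF TD] fun_eq_iff vect_apply)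
    qed
    ultimately show ?thesis using Der_comm by (auto simp: Der0_def)
  qed
  moreover have "mzero \<in> Der0 n"
    using Der_mzero by (simp add: Der0_def mzero_def En_def)
  moreover have "madd S T \<in> Der0 n" if "S \<in> Der0 n" "T \<in> Der0 n" for S T :: "'k endom"
    using that Der_madd by (auto simp: Der0_def madd_def fun_eq_iff vect_apply En_def)
  moreover have "msmul a T \<in> Der0 n" if "T \<in> Der0 n" for a and T :: "'k endom"
    using that Der_msmul by (auto simp: Der0_def msmul_def fun_eq_iff vect_apply En_def)
  ultimately show ?thesis
    unfolding lie_subalgebra_def subspace_of_def by (auto simp: Der0_def)
qed

lemma Der1_lie_ideal: "lie_ideal (Der1 n :: 'k::field endom set) (Der n)"
proof -
  have "comm S T \<in> Der1 n" if S: "S \<in> Der n" and T: "T \<in> Der1 n" for S T :: "'k endom"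
  proof -
    have TD: "T \<in> Der n" using T by (simp add: Der1_def)
    have "comm S T v \<in> Wn n" if v: "v \<in> En n" for v
      unfolding Wn_def
    proof (rule supp_inI)
      fix c assume c: "c \<notin> Bset n - Eset n"
      show "comm S T v c = 0"
      proof (cases "c \<in> Bset n")
        case True
        then obtain i where i: "c = Ee i" using c by (auto simp: Eset_def)
        have "S (T v) \<in> Wn n" using T v Der_Wn[OF S] by (simp add: Der1_def)
        then have "S (T v) c = 0" using i by (simp add: Wn_def supp_in_def)
        moreover have "T (S v) c = 0"
          using Der_basis_expansion[OF TD Der_in_Vn[OF S]] Der1_E_coord[OF T] i by simp
        ultimately show ?thesis by (simp add: comm_def)
      qed (use Der_coord_outside[OF S] Der_coord_outside[OF TD] in \<open>simp add: comm_def\<close>)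
    qed
    then show ?thesis using Der_comm[OF S TD] by (simp add: Der1_def)
  qed
  moreover have "mzero \<in> Der1 n"
    using Der_mzero by (simp add: Der1_def mzero_def Wn_def)
  moreover have "madd S T \<in> Der1 n" if "S \<in> Der1 n" "T \<in> Der1 n" for S T :: "'k endom"
    using that Der_madd by (auto simp: Der1_def madd_def Wn_def)
  moreover have "msmul a T \<in> Der1 n" if "T \<in> Der1 n" for a and T :: "'k endom"
    using that Der_msmul by (auto simp: Der1_def msmul_def Wn_def)
  ultimately show ?thesis
    unfolding lie_ideal_def subspace_of_def by (auto simp: Der1_def)
qed

section \<open>Extending endomorphisms of E to derivations\<close>

definition gl_coeff :: "'k::field endom \<Rightarrow> nat \<Rightarrow> nat \<Rightarrow> 'k" where
  "gl_coeff T i k = T (bv (Ee k)) (Ee i)"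

definition wedge_coord :: "'k::field vect \<Rightarrow> nat \<Rightarrow> nat \<Rightarrow> 'k" where
  "wedge_coord v k l = (if k < l then v (EW k l) else if l < k then - v (EW l k) else 0)"

text \<open>The derivation acting as T on E and vanishing on a, b, x, u, y: on
  e_i^e_j, x_i, u_i, y_i it is forced by the Leibniz rule, and it kills c, f, h.\<close>

definition gl_ext_coords :: "nat \<Rightarrow> 'k::field endom \<Rightarrow> 'k endom" where
  "gl_ext_coords n T v c = (case c of
     Ee i \<Rightarrow> if i \<in> idx n then (\<Sum>k\<in>idx n. gl_coeff T i k * v (Ee k)) else 0
   | EW i j \<Rightarrow> if i \<in> idx n \<and> j \<in> idx n \<and> i < j
       then (\<Sum>k\<in>idx n. gl_coeff T i k * wedge_coord v k j + gl_coeff T j k * wedge_coord v i k) else 0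
   | Xi i \<Rightarrow> if i \<in> idx n then (\<Sum>k\<in>idx n. gl_coeff T i k * v (Xi k)) else 0
   | Ui i \<Rightarrow> if i \<in> idx n then (\<Sum>k\<in>idx n. gl_coeff T i k * v (Ui k)) else 0
   | Yi i \<Rightarrow> if i \<in> idx n then (\<Sum>k\<in>idx n. gl_coeff T i k * v (Yi k)) else 0
   | _ \<Rightarrow> 0)"

definition gl_ext :: "nat \<Rightarrow> 'k::field endom \<Rightarrow> 'k endom" where
  "gl_ext n T v = (if v \<in> Vn n then gl_ext_coords n T v else vzero)"

lemma gl_ext_coords_simps [simp]:
  "gl_ext_coords n T v (Ee i) = (if i \<in> idx n then (\<Sum>k\<in>idx n. gl_coeff T i k * v (Ee k)) else 0)"
  "gl_ext_coords n T v (EW i j) = (if i \<in> idx n \<and> j \<in> idx n \<and> i < j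
     then (\<Sum>k\<in>idx n. gl_coeff T i k * wedge_coord v k j + gl_coeff T j k * wedge_coord v i k) else 0)"
  "gl_ext_coords n T v (Xi i) = (if i \<in> idx n then (\<Sum>k\<in>idx n. gl_coeff T i k * v (Xi k)) else 0)"
  "gl_ext_coords n T v (Ui i) = (if i \<in> idx n then (\<Sum>k\<in>idx n. gl_coeff T i k * v (Ui k)) else 0)"
  "gl_ext_coords n T v (Yi i) = (if i \<in> idx n then (\<Sum>k\<in>idx n. gl_coeff T i k * v (Yi k)) else 0)"
  "gl_ext_coords n T v A = 0" "gl_ext_coords n T v Bb = 0" "gl_ext_coords n T v X = 0"
  "gl_ext_coords n T v U = 0" "gl_ext_coords n T v Y = 0"
  "gl_ext_coords n T v C = 0" "gl_ext_coords n T v F = 0" "gl_ext_coords n T v H = 0"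
  by (simp_all add: gl_ext_coords_def)

lemma gl_ext_coords_in_Vn: "gl_ext_coords n T v \<in> Vn n"
  unfolding Vn_def by (rule supp_inI) (case_tac c; auto)

lemma wedge_coord_vadd: "wedge_coord (vadd v w) k l = wedge_coord v k l + wedge_coord w k l"
  by (simp add: wedge_coord_def vect_apply)

lemma wedge_coord_vsmul: "wedge_coord (vsmul a v) k l = a * wedge_coord v k l"
  by (simp add: wedge_coord_def vect_apply)

lemma wedge_coord_bracket:
  "k \<in> idx n \<Longrightarrow> l \<in> idx n \<Longrightarrow> wedge_coord (bracket n v w) k l = v (Ee k) * w (Ee l) - v (Ee l) * w (Ee k)"
  by (auto simp: wedge_coord_def)

lemma wedge_coord_En: "v \<in> En n \<Longrightarrow> wedge_coord v k l = 0"
  by (simp add: wedge_coord_def En_coord_outside)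

lemma wedge_coord_bv: "(\<And>i j. p \<noteq> EW i j) \<Longrightarrow> wedge_coord (bv p) k l = 0"
  by (auto simp: wedge_coord_def bv_def)

lemma gl_ext_coords_vadd: "gl_ext_coords n T (vadd v w) = vadd (gl_ext_coords n T v) (gl_ext_coords n T w)"
  by (rule ext, case_tac x) (simp_all add: vect_apply wedge_coord_vadd sum.distrib algebra_simps)

lemma gl_ext_coords_vsmul: "gl_ext_coords n T (vsmul a v) = vsmul a (gl_ext_coords n T v)"
  by (rule ext, case_tac x) (simp_all add: vect_apply wedge_coord_vsmul sum_distrib_left algebra_simps)

lemma sum_mult_diff_left:
  fixes a :: "'b \<Rightarrow> 'k::comm_ring"
  shows "(\<Sum>k\<in>K. a k * (f k * y - x * g k)) = (\<Sum>k\<in>K. a k * f k) * y - x * (\<Sum>k\<in>K. a k * g k)"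
  by (simp add: sum_subtractf sum_distrib_left sum_distrib_right algebra_simps)

lemma sum_mult_diff_right:
  fixes a :: "'b \<Rightarrow> 'k::comm_ring"
  shows "(\<Sum>k\<in>K. a k * (x * g k - f k * y)) = x * (\<Sum>k\<in>K. a k * g k) - (\<Sum>k\<in>K. a k * f k) * y"
  by (simp add: sum_subtractf sum_distrib_left sum_distrib_right algebra_simps)

lemma gl_ext_coords_bracket:
  "gl_ext_coords n T (bracket n v w)
    = vadd (bracket n (gl_ext_coords n T v) w) (bracket n v (gl_ext_coords n T w))"
proof
  fix c
  show "gl_ext_coords n T (bracket n v w) c
      = vadd (bracket n (gl_ext_coords n T v) w) (bracket n v (gl_ext_coords n T w)) c"
  proof (cases c)
    case (EW i j)
    show ?thesis
    proof (cases "i \<in> idx n \<and> j \<in> idx n \<and> i < j")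
      case True
      then show ?thesis using EW
        by (simp add: vadd_apply wedge_coord_bracket sum.distrib sum_mult_diff_left sum_mult_diff_right)
    next
      case False
      then show ?thesis using EW
        by (simp only: gl_ext_coords_simps bracket_EW vadd_apply if_not_P[OF False]) simp
    qed
  qed (simp_all add: vadd_apply sum_mult_diff_left)
qed

lemma gl_ext_Der: "gl_ext n T \<in> Der n"
proof -
  have "gl_ext n T \<in> endo (Vn n)"
    unfolding endo_def gl_ext_def using gl_ext_coords_in_Vn
    by (auto simp: gl_ext_coords_vadd gl_ext_coords_vsmul Vn_def)
  then show ?thesis
    by (simp add: Der_def gl_ext_def gl_ext_coords_bracket)
qed

lemma gl_ext_coords_En:
  assumes "v \<in> En n"
  shows "gl_ext_coords n T v \<in> En n"
  unfolding En_def by (rule supp_inI) (case_tac c; simp add: wedge_coord_En[OF assms] En_coord_outside[OF assms])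

lemma gl_ext_Der0: "gl_ext n T \<in> Der0 n"
proof -
  have "gl_ext n T (bv p) = vzero" if "p \<in> {A, Bb, X, U, Y}" for p
  proof -
    have "gl_ext_coords n T (bv p) = vzero"
      using that by (intro ext, case_tac x) (auto simp: vect_apply wedge_coord_bv)
    then show ?thesis using that by (auto simp: gl_ext_def Vn_def)
  qed
  moreover have "gl_ext n T v \<in> En n" if "v \<in> En n" for v
    using gl_ext_coords_En[OF that] En_imp_Vn[OF that] by (simp add: gl_ext_def)
  ultimately show ?thesis using gl_ext_Der by (simp add: Der0_def)
qed

lemma gl_ext_on_En:
  assumes T: "T \<in> glE n" and v: "v \<in> En n"
  shows "gl_ext n T v = T v"
proof
  fix c
  have T': "T \<in> endo (supp_in (Eset n))" using T by (simp add: glE_def En_def)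
  have ext: "gl_ext n T v = gl_ext_coords n T v" using En_imp_Vn[OF v] by (simp add: gl_ext_def)
  show "gl_ext n T v c = T v c"
  proof (cases "c \<in> Eset n")
    case True
    then obtain i where i: "c = Ee i" "i \<in> idx n" by (auto simp: Eset_def)
    have "T v c = (\<Sum>p\<in>Eset n. v p * T (bv p) c)"
      using endo_basis_expansion[OF T' _ v[unfolded En_def]] by simp
    also have "\<dots> = (\<Sum>k\<in>idx n. v (Ee k) * T (bv (Ee k)) c)"
      unfolding Eset_def by (subst sum.reindex) (auto simp: inj_on_def)
    finally show ?thesis using i ext by (simp add: gl_coeff_def mult.commute)
  next
    case False
    have "T v \<in> En n" using endoD(1)[OF T[unfolded glE_def] v] .
    then show ?thesis
      using En_coord_outside False gl_ext_coords_En[OF v] ext by metis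
  qed
qed

section \<open>Der_0 is isomorphic to gl(E)\<close>

lemma Der0_eqI:
  assumes S: "S \<in> Der0 n" and T: "T \<in> Der0 n"
    and E: "\<And>i. i \<in> idx n \<Longrightarrow> S (bv (Ee i)) = T (bv (Ee i))"
  shows "S = T"
proof -
  let ?Z = "madd S (msmul (-1) T)"
  have ZD: "?Z \<in> Der n" using S T Der_diff unfolding Der0_def by blast
  have "?Z = mzero"
  proof (rule Der_eq_mzero_if_generators[OF ZD])
    fix p assume "generator p"
    then consider i where "p = Ee i" | "p \<in> {A, Bb, X, U, Y}" unfolding generator_def by blast
    then show "?Z (bv p) = vzero"
    proof cases
      case 1
      show ?thesis
      proof (cases "i \<in> idx n")
        case True
        then show ?thesis using E[OF True] 1 by (simp add: madd_def msmul_def fun_eq_iff vect_apply)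
      next
        case False
        then show ?thesis using Der_bv_outside[OF ZD, of p] 1 by simp
      qed
    next
      case 2
      then show ?thesis using S T by (auto simp: Der0_def madd_def msmul_def fun_eq_iff vect_apply)
    qed
  qed
  have "S v c = T v c" for v c
  proof -
    have "?Z v c = 0" using \<open>?Z = mzero\<close> by (simp add: mzero_def vzero_def)
    then have "S v c + -1 * T v c = 0" by (simp only: madd_def msmul_def vadd_apply vsmul_apply)
    then show ?thesis by simp
  qed
  then show ?thesis by (intro ext)
qed

definition restrict_E :: "nat \<Rightarrow> 'k::field endom \<Rightarrow> 'k endom" where
  "restrict_E n D = (\<lambda>v. if v \<in> En n then D v else vzero)"

lemma restrict_E_glE:
  fixes D :: "'k::field endom"
  assumes D: "D \<in> Der0 n"
  shows "restrict_E n D \<in> glE n"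
proof -
  have e: "D \<in> endo (Vn n)" using D DerD(1) unfolding Der0_def by blast
  have E: "D v \<in> En n" if "v \<in> En n" for v using D that by (simp add: Der0_def)
  show ?thesis
    unfolding glE_def endo_def restrict_E_def
  proof (intro CollectI conjI ballI allI impI)
    fix v w :: "'k vect" assume v: "v \<in> En n" and w: "w \<in> En n"
    then show "(if vadd v w \<in> En n then D (vadd v w) else vzero)
        = vadd (if v \<in> En n then D v else vzero) (if w \<in> En n then D w else vzero)"
      using endoD(2)[OF e En_imp_Vn[OF v] En_imp_Vn[OF w]] by simp
  next
    fix a and v :: "'k vect" assume v: "v \<in> En n"
    then show "(if vsmul a v \<in> En n then D (vsmul a v) else vzero) = vsmul a (if v \<in> En n then D v else vzero)"
      using endoD(3)[OF e En_imp_Vn[OF v]] by simp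
  qed (use E in auto)
qed

lemma restrict_E_gl_ext:
  assumes "T \<in> glE n"
  shows "restrict_E n (gl_ext n T) = T"
proof
  fix v
  show "restrict_E n (gl_ext n T) v = T v"
    using gl_ext_on_En[OF assms, of v] endoD(4)[of T "En n" v] assms by (auto simp: restrict_E_def glE_def)
qed

lemma lie_iso_restrict_E: "lie_iso (restrict_E n) (Der0 n :: 'k::field endom set) (glE n)"
proof -
  have inj: "inj_on (restrict_E n) (Der0 n :: 'k endom set)"
  proof (rule inj_onI)
    fix S T :: "'k endom"
    assume S: "S \<in> Der0 n" and T: "T \<in> Der0 n" and eq: "restrict_E n S = restrict_E n T"
    show "S = T"
    proof (rule Der0_eqI[OF S T])
      fix i assume "i \<in> idx n"
      then have "(bv (Ee i) :: 'k vect) \<in> En n" by (simp add: En_def)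
      then show "S (bv (Ee i)) = T (bv (Ee i))" using fun_cong[OF eq, of "bv (Ee i)"] by (simp add: restrict_E_def)
    qed
  qed
  have image: "restrict_E n ` Der0 n = (glE n :: 'k endom set)"
  proof
    show "restrict_E n ` Der0 n \<subseteq> glE n" using restrict_E_glE by blast
    show "glE n \<subseteq> restrict_E n ` Der0 n" using restrict_E_gl_ext gl_ext_Der0 by (metis image_eqI subsetI)
  qed
  have comm: "restrict_E n (comm S T) = comm (restrict_E n S) (restrict_E n T)"
    if S: "S \<in> Der0 n" and T: "T \<in> Der0 n" for S T :: "'k endom"
  proof
    fix v
    have "S vzero = vzero" "T vzero = vzero" using S T Der_vzero by (auto simp: Der0_def)
    moreover have "S v \<in> En n" "T v \<in> En n" if "v \<in> En n" using S T that by (auto simp: Der0_def)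
    ultimately show "restrict_E n (comm S T) v = comm (restrict_E n S) (restrict_E n T) v"
      by (auto simp: restrict_E_def comm_def vzero_def)
  qed
  have "restrict_E n (madd S T) = madd (restrict_E n S) (restrict_E n T)"
    "restrict_E n (msmul a T) = msmul a (restrict_E n T)" for a and S T :: "'k endom"
    by (simp_all add: restrict_E_def madd_def msmul_def fun_eq_iff vect_apply)
  then show ?thesis using inj image comm by (simp add: lie_iso_def bij_betw_def)
qed

lemma Der_decomposition_exists:
  fixes D :: "'k::field endom"
  assumes D: "D \<in> Der n"
  obtains D0 D1 where "D0 \<in> Der0 n" "D1 \<in> Der1 n" "D = madd D0 D1"
proof -
  define P where "P = (\<lambda>v. if v \<in> En n then (\<lambda>c. if c \<in> Eset n then D v c else 0) else vzero)"
  have eD: "D \<in> endo (Vn n)" using DerD(1)[OF D] .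
  have P: "P \<in> glE n"
    unfolding glE_def endo_def
  proof (intro CollectI conjI ballI allI impI)
    fix v :: "'k vect" assume "v \<in> En n"
    then show "P v \<in> En n" by (simp add: P_def En_def supp_in_def)
  next
    fix v w :: "'k vect" assume v: "v \<in> En n" and w: "w \<in> En n"
    then show "P (vadd v w) = vadd (P v) (P w)"
      using endoD(2)[OF eD En_imp_Vn[OF v] En_imp_Vn[OF w]] by (simp add: P_def fun_eq_iff vect_apply)
  next
    fix a and v :: "'k vect" assume v: "v \<in> En n"
    then show "P (vsmul a v) = vsmul a (P v)"
      using endoD(3)[OF eD En_imp_Vn[OF v]] by (simp add: P_def fun_eq_iff vect_apply)
  qed (simp add: P_def)
  let ?D1 = "madd D (msmul (-1) (gl_ext n P))"
  have "?D1 v \<in> Wn n" if v: "v \<in> En n" for v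
  proof -
    have "?D1 v c = D v c - P v c" for c
      using gl_ext_on_En[OF P v] by (simp add: madd_def msmul_def vect_apply)
    then show ?thesis
      using v Der_coord_outside[OF D] by (auto simp: Wn_def supp_in_def P_def)
  qed
  then have "?D1 \<in> Der1 n"
    using Der_diff[OF D gl_ext_Der] by (simp add: Der1_def)
  moreover have "D = madd (gl_ext n P) ?D1"
    by (simp add: madd_def msmul_def fun_eq_iff vect_apply)
  ultimately show ?thesis using that gl_ext_Der0 by blast
qed

lemma Der_decomposition_unique:
  assumes "D0 \<in> Der0 n" "D0' \<in> Der0 n" "D1 \<in> Der1 n" "D1' \<in> Der1 n"
    and eq: "madd D0 D1 = madd D0' D1'"
  shows "D0 = D0'" "D1 = D1'"
proof -
  have coords: "D0 v c + D1 v c = D0' v c + D1' v c" for v c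
    using fun_cong[OF fun_cong[OF eq, of v], of c] by (simp only: madd_def vadd_apply)
  show "D0 = D0'"
  proof (rule Der0_eqI[OF assms(1,2)])
    fix i assume "i \<in> idx n"
    then have E: "D0 (bv (Ee i)) \<in> En n" "D0' (bv (Ee i)) \<in> En n"
      using assms(1,2) by (auto simp: Der0_def En_def)
    show "D0 (bv (Ee i)) = D0' (bv (Ee i))"
    proof
      fix c
      show "D0 (bv (Ee i)) c = D0' (bv (Ee i)) c"
      proof (cases "c \<in> Eset n")
        case True
        then obtain k where "c = Ee k" by (auto simp: Eset_def)
        then show ?thesis
          using coords[of "bv (Ee i)" c] Der1_E_coord[OF assms(3)] Der1_E_coord[OF assms(4)] by simp
      next
        case False
        then show ?thesis using En_coord_outside[OF E(1) False] En_coord_outside[OF E(2) False] by simp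
      qed
    qed
  qed
  then show "D1 = D1'" using coords by (intro ext) simp
qed

lemma Der_unique_decomposition:
  assumes "D \<in> Der n"
  shows "\<exists>!P. fst P \<in> Der0 n \<and> snd P \<in> Der1 n \<and> D = madd (fst P) (snd P)"
proof -
  obtain D0 D1 where D01: "D0 \<in> Der0 n" "D1 \<in> Der1 n" and "D = madd D0 D1"
    using Der_decomposition_exists[OF assms] .
  show ?thesis
  proof (rule ex1I[of _ "(D0, D1)"])
    fix P assume P: "fst P \<in> Der0 n \<and> snd P \<in> Der1 n \<and> D = madd (fst P) (snd P)"
    with \<open>D = madd D0 D1\<close> have "madd (fst P) (snd P) = madd D0 D1" by simp
    then have "fst P = D0" "snd P = D1"
      using Der_decomposition_unique[OF _ D01(1) _ D01(2)] P by blast+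
    then show "P = (D0, D1)" by (simp add: prod_eq_iff)
  qed (use D01 \<open>D = madd D0 D1\<close> in simp)
qed

section \<open>Solvability of Der_1\<close>

fun weight :: "basis \<Rightarrow> nat" where
  "weight (Ee i) = 6" | "weight A = 5"
| "weight Bb = 4" | "weight X = 4" | "weight U = 4" | "weight Y = 4"
| "weight (EW i j) = 3"
| "weight C = 2" | "weight (Xi i) = 2" | "weight (Ui i) = 2" | "weight (Yi i) = 2"
| "weight F = 1" | "weight H = 0"

lemma weight_le_6: "weight p \<le> 6"
  by (cases p) auto

definition weight_triangular :: "nat \<Rightarrow> 'k::field endom set" where
  "weight_triangular n =
    {T \<in> endo (Vn n). \<forall>p q. q \<noteq> p \<and> weight p \<le> weight q \<longrightarrow> T (bv p) q = 0}"

definition weight_lowering :: "nat \<Rightarrow> nat \<Rightarrow> 'k::field endom set" where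
  "weight_lowering n k = {T \<in> endo (Vn n). \<forall>p q. weight p < weight q + k \<longrightarrow> T (bv p) q = 0}"

lemma Der1_weight_triangular:
  assumes D: "D \<in> Der1 n" and n: "n \<ge> 1"
  shows "D \<in> weight_triangular n"
proof -
  have DD: "D \<in> Der n" using D by (simp add: Der1_def)
  have leibniz_rules:
    "i < j \<Longrightarrow> i \<in> idx n \<Longrightarrow> j \<in> idx n \<Longrightarrow> D (bv (EW i j)) = leibniz n D (Ee i) (Ee j)"
    "i \<in> idx n \<Longrightarrow> D (bv (Xi i)) = leibniz n D (Ee i) X"
    "i \<in> idx n \<Longrightarrow> D (bv (Ui i)) = leibniz n D (Ee i) U"
    "i \<in> idx n \<Longrightarrow> D (bv (Yi i)) = leibniz n D (Ee i) Y"
    "D (bv C) = leibniz n D A Bb" "D (bv F) = leibniz n D X U" "D (bv H) = leibniz n D X Y"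
    for i j
    by (simp_all add: Der_br[OF DD, symmetric] br_simps)
  have "D (bv p) q = 0" if "q \<noteq> p" "weight p \<le> weight q" for p q
  proof (cases "p \<in> Bset n")
    case True
    then show ?thesis
      using that by (cases p; cases q) (simp_all add: leibniz_rules leibniz_def vect_apply
          Der_generator_E_coords[OF DD] Der_generator_G_coords[OF DD n] Der1_E_coord[OF D])
  qed (simp add: Der_bv_outside[OF DD] vect_apply)
  then show ?thesis using DerD(1)[OF DD] by (simp add: weight_triangular_def)
qed

lemma weight_triangular_comp_coord:
  fixes S T :: "'k::field endom"
  assumes S: "S \<in> weight_triangular n" and T: "T \<in> weight_triangular n"
    and le: "weight p \<le> weight q"
  shows "(\<Sum>r\<in>Bset n. T (bv p) r * S (bv r) q)
    = (if q = p \<and> p \<in> Bset n then T (bv p) p * S (bv p) p else 0)"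
proof -
  have "T (bv p) r * S (bv r) q = 0" if "r \<noteq> p \<or> q \<noteq> p" for r
  proof (cases "r \<noteq> p \<and> weight p \<le> weight r")
    case True
    then show ?thesis using T by (simp add: weight_triangular_def)
  next
    case False
    then have "q \<noteq> r" "weight r \<le> weight q"
      using that le by auto
    then show ?thesis using S by (simp add: weight_triangular_def)
  qed
  then have "(\<Sum>r\<in>Bset n. T (bv p) r * S (bv r) q)
      = (\<Sum>r\<in>Bset n. if r = p then (if q = p then T (bv p) p * S (bv p) p else 0) else 0)"
    by (intro sum.cong) auto
  then show ?thesis by simp
qed

lemma comm_weight_triangular:
  fixes S T :: "'k::field endom"
  assumes S: "S \<in> weight_triangular n" and T: "T \<in> weight_triangular n"
  shows "comm S T \<in> weight_lowering n 1"
proof -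
  have eS: "S \<in> endo (supp_in (Bset n))" and eT: "T \<in> endo (supp_in (Bset n))"
    using S T by (auto simp: weight_triangular_def Vn_def)
  have "comm S T (bv p) q = 0" if "weight p < weight q + 1" for p q
  proof -
    have "comm S T (bv p) q = (\<Sum>r\<in>Bset n. T (bv p) r * S (bv r) q) - (\<Sum>r\<in>Bset n. S (bv p) r * T (bv r) q)"
      using endo_comp_basis_expansion[OF eS eT] endo_comp_basis_expansion[OF eT eS] by (simp add: comm_def)
    also have "\<dots> = 0"
      using weight_triangular_comp_coord[OF S T] weight_triangular_comp_coord[OF T S] that
      by (simp add: mult.commute)
    finally show ?thesis .
  qed
  moreover have "comm S T \<in> endo (Vn n)" using endo_comm[OF eS eT] by (simp add: Vn_def)
  ultimately show ?thesis by (simp add: weight_lowering_def)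
qed

lemma comm_weight_lowering:
  fixes S T :: "'k::field endom"
  assumes S: "S \<in> weight_lowering n k" and T: "T \<in> weight_lowering n k" and k: "k \<ge> 1"
  shows "comm S T \<in> weight_lowering n (Suc k)"
proof -
  have eS: "S \<in> endo (supp_in (Bset n))" and eT: "T \<in> endo (supp_in (Bset n))"
    using S T by (auto simp: weight_lowering_def Vn_def)
  have product: "S' (bv p) r * T' (bv r) q = 0"
    if "S' \<in> weight_lowering n k" "T' \<in> weight_lowering n k" "weight p < weight q + Suc k"
    for S' T' :: "'k endom" and p q r
    using that k by (cases "weight p < weight r + k") (auto simp: weight_lowering_def)
  have "comm S T (bv p) q = 0" if "weight p < weight q + Suc k" for p q
  proof -
    have "comm S T (bv p) q = (\<Sum>r\<in>Bset n. T (bv p) r * S (bv r) q) - (\<Sum>r\<in>Bset n. S (bv p) r * T (bv r) q)"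
      using endo_comp_basis_expansion[OF eS eT] endo_comp_basis_expansion[OF eT eS] by (simp add: comm_def)
    also have "\<dots> = 0"
      using product[OF T S that] product[OF S T that] by (simp add: sum.neutral)
    finally show ?thesis .
  qed
  moreover have "comm S T \<in> endo (Vn n)" using endo_comm[OF eS eT] by (simp add: Vn_def)
  ultimately show ?thesis by (simp add: weight_lowering_def)
qed

lemma mzero_weight_lowering: "mzero \<in> weight_lowering n k"
  unfolding weight_lowering_def using endo_mzero[of "Bset n"] by (simp add: Vn_def mzero_def vzero_def)

lemma comm_span_subset_weight_lowering:
  fixes L :: "'k::field endom set"
  assumes "\<And>S T. S \<in> L \<Longrightarrow> T \<in> L \<Longrightarrow> comm S T \<in> weight_lowering n k"
  shows "comm_span L \<subseteq> weight_lowering n k"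
proof
  fix Z assume "Z \<in> comm_span L"
  then show "Z \<in> weight_lowering n k"
  proof (induction rule: comm_span.induct)
    case cs_zero
    then show ?case by (rule mzero_weight_lowering)
  next
    case (cs_comm S T)
    then show ?case using assms by blast
  next
    case (cs_add S T)
    have "madd S T \<in> endo (Vn n)"
      using cs_add endo_madd[of S "Bset n" T] by (simp add: weight_lowering_def Vn_def)
    moreover have "madd S T (bv p) q = S (bv p) q + T (bv p) q" for p q
      by (simp add: madd_def vect_apply)
    ultimately show ?case using cs_add by (simp add: weight_lowering_def)
  next
    case (cs_smul T a)
    have "msmul a T \<in> endo (Vn n)"
      using cs_smul endo_msmul[of T "Bset n" a] by (simp add: weight_lowering_def Vn_def)
    moreover have "msmul a T (bv p) q = a * T (bv p) q" for p q
      by (simp add: msmul_def vect_apply)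
    ultimately show ?case using cs_smul by (simp add: weight_lowering_def)
  qed
qed

lemma derived_series_Der1_weight_lowering:
  assumes n: "n \<ge> 1"
  shows "derived_series (Der1 n :: 'k::field endom set) (Suc m) \<subseteq> weight_lowering n (Suc m)"
proof (induction m)
  case 0
  have "comm_span (Der1 n :: 'k endom set) \<subseteq> weight_lowering n 1"
  proof (rule comm_span_subset_weight_lowering)
    fix S T :: "'k endom" assume "S \<in> Der1 n" "T \<in> Der1 n"
    then show "comm S T \<in> weight_lowering n 1"
      using comm_weight_triangular Der1_weight_triangular n by blast
  qed
  then show ?case by simp
next
  case (Suc m)
  have "comm_span (derived_series (Der1 n :: 'k endom set) (Suc m)) \<subseteq> weight_lowering n (Suc (Suc m))"
  proof (rule comm_span_subset_weight_lowering)
    fix S T :: "'k endom" assume "S \<in> derived_series (Der1 n) (Suc m)" "T \<in> derived_series (Der1 n) (Suc m)"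
    then have "S \<in> weight_lowering n (Suc m)" "T \<in> weight_lowering n (Suc m)" using Suc.IH by blast+
    then show "comm S T \<in> weight_lowering n (Suc (Suc m))" by (rule comm_weight_lowering) simp
  qed
  then show ?case by simp
qed

lemma weight_lowering_eq_mzero:
  assumes "6 < k"
  shows "weight_lowering n k = {mzero}"
proof -
  have "T = mzero" if T: "T \<in> weight_lowering n k" for T :: "'a::field endom"
  proof
    fix v
    have eT: "T \<in> endo (supp_in (Bset n))" using T by (simp add: weight_lowering_def Vn_def)
    have basis: "T (bv p) c = 0" for p c
      using T weight_le_6[of p] assms by (simp add: weight_lowering_def)
    show "T v = mzero v"
    proof (cases "v \<in> supp_in (Bset n)")
      case True
      then show ?thesis using endo_basis_expansion[OF eT _ True] basis by (simp add: mzero_def vzero_def)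
    qed (simp add: endoD(4)[OF eT] mzero_def)
  qed
  then show ?thesis using mzero_weight_lowering by blast
qed

lemma Der1_solvable:
  assumes "n \<ge> 1"
  shows "solvable (Der1 n :: 'k::field endom set)"
proof -
  have "derived_series (Der1 n :: 'k endom set) (Suc 6) \<subseteq> weight_lowering n (Suc 6)"
    by (rule derived_series_Der1_weight_lowering[OF assms])
  also have "\<dots> = {mzero}"
    by (rule weight_lowering_eq_mzero) simp
  finally have "derived_series (Der1 n :: 'k endom set) (Suc 6) \<subseteq> {mzero}" .
  moreover have "mzero \<in> derived_series (Der1 n :: 'k endom set) (Suc 6)"
    unfolding derived_series.simps(2) by (rule comm_span.cs_zero)
  ultimately show ?thesis
    unfolding solvable_def by blast
qed

theorem mainTheorem4:
  assumes "n \<ge> 1"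
  shows "(lie_subalgebra (Der0 n :: ((basis \<Rightarrow> 'k::field_char_0) \<Rightarrow> basis \<Rightarrow> 'k) set) (Der n)
          \<and> (\<exists>\<phi>. lie_iso \<phi> (Der0 n :: ((basis \<Rightarrow> 'k) \<Rightarrow> basis \<Rightarrow> 'k) set) (glE n)))
    \<and> (lie_ideal (Der1 n :: ((basis \<Rightarrow> 'k) \<Rightarrow> basis \<Rightarrow> 'k) set) (Der n)
          \<and> solvable (Der1 n :: ((basis \<Rightarrow> 'k) \<Rightarrow> basis \<Rightarrow> 'k) set))
    \<and> (\<forall>D \<in> (Der n :: ((basis \<Rightarrow> 'k) \<Rightarrow> basis \<Rightarrow> 'k) set).
          \<exists>!P. fst P \<in> Der0 n \<and> snd P \<in> Der1 n \<and> D = madd (fst P) (snd P))"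
proof (intro conjI ballI)
  show "lie_subalgebra (Der0 n :: 'k endom set) (Der n)"
    by (rule Der0_lie_subalgebra)
  show "\<exists>\<phi>. lie_iso \<phi> (Der0 n :: 'k endom set) (glE n)"
    using lie_iso_restrict_E by blast
  show "lie_ideal (Der1 n :: 'k endom set) (Der n)"
    by (rule Der1_lie_ideal)
  show "solvable (Der1 n :: 'k endom set)"
    using assms by (rule Der1_solvable)
  show "\<exists>!P. fst P \<in> Der0 n \<and> snd P \<in> Der1 n \<and> D = madd (fst P) (snd P)"
    if "D \<in> Der n" for D :: "'k endom"
    using that by (rule Der_unique_decomposition)
qed

end
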